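(* Let $A,B\subseteq\mathbb{R}^n$ be finite (Euclidean metric), $\beta>0$ and $\delta>d_P(A,B)$. For all $r>0$ and $k>\delta$, $$\mathrm{DCr}^\beta_{r,k}(A)\subseteq\mathrm{DCr}^\beta_{r',k-\delta}(B)\quad\text{and}\quad\mathrm{DCr}^\beta_{r,k}(B)\subseteq\mathrm{DCr}^\beta_{r',k-\delta}(A),$$ where $r'=\max\{1,2\beta\}\big((1+\beta^{-1})r+\delta\big)$.
   Context: $d$ Euclidean, $\bar B_d(x,r)=\{y:d(x,y)\le r\}$. For finite $A$, $k>0$, $x\in\mathbb{R}^n$, $\mathrm{core}^A_k(x)$ is the distance from $x$ to its $\lceil k\rceil$-th nearest neighbor in $A$ (each point of $A$ counted once, $x$ itself counting if $x\in A$); equivalently $\min\{r\ge0:|\bar B_d(x,r)\cap A|\ge k\}$, and $\infty$ if $k>|A|$. For $\beta>0$: $\Lambda^\beta_k(a,x)=\max\{\beta\,\mathrm{core}^A_k(a),d(a,x)\}$, $B^\beta_{r,k}(a)=\{x:\Lambda^\beta_k(a,x)\le r\}$, $\mathrm{Vor}_A(a)=\{x:d(a,x)\le d(a',x)\ \forall a'\in A\}$, and $\mathrm{DCr}^\beta_{r,k}(A)=\bigcup_{a\in A}\big(B^\beta_{r,k}(a)\cap\mathrm{Vor}_A(a)\big)$ (similarly for $B$). For $S\subseteq\mathbb{R}^n$, $\delta\ge0$: $S^\delta=\bigcup_{s\in S}\bar B_d(s,\delta)$. Counting Prohorov distance: $d_P(A,B)=\sup_{S\text{ closed}}\inf\{\delta\ge0:|S\cap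 A|\le|S^\delta\cap B|+\delta\text{ and }|S\cap B|\le|S^\delta\cap A|+\delta\}$. *)

theory Defs
  imports "HOL-Analysis.Analysis"
begin

text \<open>core^A_k(x): smallest radius r >= 0 such that the closed ball of radius r around x
  contains at least k points of A; infinity if no such radius exists (i.e. k > |A|).\<close>
definition core :: "'a::euclidean_space set \<Rightarrow> real \<Rightarrow> 'a \<Rightarrow> ereal" where
  "core A k x = Inf {ereal r | r. r \<ge> 0 \<and> real (card (cball x r \<inter> A)) \<ge> k}"

definition Lambda :: "real \<Rightarrow> 'a::euclidean_space set \<Rightarrow> real \<Rightarrow> 'a \<Rightarrow> 'a \<Rightarrow> ereal" where
  "Lambda \<beta> A k a x = max (ereal \<beta> * core A k a) (ereal (dist a x))"

definition Bset :: "real \<Rightarrow> real \<Rightarrow> real \<Rightarrow> 'a::euclidean_space set \<Rightarrow> 'a \<Rightarrow> 'a set" where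
  "Bset \<beta> r k A a = {x. Lambda \<beta> A k a x \<le> ereal r}"

definition Vor :: "'a::euclidean_space set \<Rightarrow> 'a \<Rightarrow> 'a set" where
  "Vor A a = {x. \<forall>a'\<in>A. dist a x \<le> dist a' x}"

definition DCr :: "real \<Rightarrow> real \<Rightarrow> real \<Rightarrow> 'a::euclidean_space set \<Rightarrow> 'a set" where
  "DCr \<beta> r k A = (\<Union>a\<in>A. Bset \<beta> r k A a \<inter> Vor A a)"

definition thicken :: "'a::euclidean_space set \<Rightarrow> real \<Rightarrow> 'a set" where
  "thicken S \<delta> = (\<Union>s\<in>S. cball s \<delta>)"

definition prohorov :: "'a::euclidean_space set \<Rightarrow> 'a set \<Rightarrow> real" where
  "prohorov A B = (SUP S\<in>{S. closed S}.
     Inf {\<delta>::real. \<delta> \<ge> 0 \<and> real (card (S \<inter> A)) \<le> real (card (thicken S \<delta> \<inter> B)) + \<delta>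
                     \<and> real (card (S \<inter> B)) \<le> real (card (thicken S \<delta> \<inter> A)) + \<delta>})"

end

theory Submission
  imports Defs
begin

text \<open>Fix a centre \<open>a \<in> A\<close> of a cell containing \<open>x\<close>. The ball of radius \<open>core A k a \<le> r/\<beta>\<close>
  around \<open>a\<close> holds \<open>k\<close> points of \<open>A\<close>, so its \<open>\<delta>\<close>-thickening holds \<open>k - \<delta>\<close> points of \<open>B\<close>; hence
  \<open>core B (k - \<delta>) a \<le> r/\<beta> + \<delta>\<close> and some point of \<open>B\<close> lies within \<open>r/\<beta> + \<delta>\<close> of \<open>a\<close>.
  The point \<open>b \<in> B\<close> nearest to \<open>x\<close> is then within \<open>R = (1 + 1/\<beta>) r + \<delta>\<close> of \<open>x\<close>, and since
  the core is 1-Lipschitz in the centre, \<open>core B (k - \<delta>) b \<le> 2R\<close>. So \<open>x\<close> lies in the cell of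
  \<open>b\<close> at radius \<open>max 1 (2\<beta>) R\<close>.\<close>

lemma thicken_mono: "\<delta> \<le> \<delta>' \<Longrightarrow> thicken S \<delta> \<subseteq> thicken S \<delta>'"
  unfolding thicken_def by auto

lemma thicken_cball_subset: "thicken (cball a \<rho>) \<delta> \<subseteq> cball a (\<rho> + \<delta>)"
proof
  fix z assume "z \<in> thicken (cball a \<rho>) \<delta>"
  then obtain s where "dist a s \<le> \<rho>" "dist s z \<le> \<delta>"
    unfolding thicken_def by auto
  with dist_triangle[of a z s] show "z \<in> cball a (\<rho> + \<delta>)"
    by simp
qed

lemma prohorov_lessD:
  fixes A B :: "'a::euclidean_space set"
  assumes fA: "finite A" and fB: "finite B" and d: "\<delta> > prohorov A B" and S: "closed S"
  shows "\<delta> \<ge> 0"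
    and "real (card (S \<inter> A)) \<le> real (card (thicken S \<delta> \<inter> B)) + \<delta>"
    and "real (card (S \<inter> B)) \<le> real (card (thicken S \<delta> \<inter> A)) + \<delta>"
proof -
  define D where "D = (\<lambda>S. {\<delta>::real. \<delta> \<ge> 0
      \<and> real (card (S \<inter> A)) \<le> real (card (thicken S \<delta> \<inter> B)) + \<delta>
      \<and> real (card (S \<inter> B)) \<le> real (card (thicken S \<delta> \<inter> A)) + \<delta>})"
  have mem: "real (card A) + real (card B) \<in> D S'" for S'
  proof -
    have "card (S' \<inter> A) \<le> card A" "card (S' \<inter> B) \<le> card B"
      using fA fB by (auto intro: card_mono)
    then show ?thesis unfolding D_def by auto
  qed
  have bdd: "bdd_below (D S')" for S'
    unfolding D_def by (auto intro: bdd_belowI[where m=0])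
  have "bdd_above ((\<lambda>S. Inf (D S)) ` {S. closed S})"
    using cInf_lower[OF mem bdd] by (intro bdd_aboveI) auto
  then have "Inf (D S) \<le> prohorov A B"
    using S unfolding prohorov_def D_def by (auto intro: cSUP_upper)
  with d obtain \<delta>' where \<delta>': "\<delta>' \<in> D S" "\<delta>' < \<delta>"
    using cInf_lessD[of "D S" \<delta>] mem by force
  have "card (thicken S \<delta>' \<inter> B) \<le> card (thicken S \<delta> \<inter> B)"
       "card (thicken S \<delta>' \<inter> A) \<le> card (thicken S \<delta> \<inter> A)"
    using fA fB thicken_mono[of \<delta>' \<delta> S] \<delta>'(2) by (auto intro: card_mono)
  with \<delta>' show "\<delta> \<ge> 0"
    and "real (card (S \<inter> A)) \<le> real (card (thicken S \<delta> \<inter> B)) + \<delta>"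
    and "real (card (S \<inter> B)) \<le> real (card (thicken S \<delta> \<inter> A)) + \<delta>"
    unfolding D_def by auto
qed

lemma core_le:
  assumes "r \<ge> 0" "real (card (cball x r \<inter> A)) \<ge> k"
  shows "core A k x \<le> ereal r"
  unfolding core_def using assms by (intro Inf_lower) auto

lemma core_lessE:
  assumes "core A k x < ereal t"
  obtains \<rho> where "0 \<le> \<rho>" "\<rho> < t" "real (card (cball x \<rho> \<inter> A)) \<ge> k"
  using assms unfolding core_def Inf_less_iff by auto

lemma core_le_transfer:
  assumes core: "core A k x \<le> ereal t" and c: "c \<ge> 0"
    and count: "\<And>\<rho>. \<rho> \<ge> 0 \<Longrightarrow> real (card (cball x \<rho> \<inter> A)) \<ge> k
                  \<Longrightarrow> real (card (cball y (\<rho> + c) \<inter> B)) \<ge> k'"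
  shows "core B k' y \<le> ereal (t + c)"
proof (rule ereal_le_epsilon2)
  fix e :: real assume "e > 0"
  with core have "core A k x < ereal (t + e)" by (simp add: le_less_trans)
  then obtain \<rho> where "0 \<le> \<rho>" "\<rho> < t + e" "real (card (cball x \<rho> \<inter> A)) \<ge> k"
    by (rule core_lessE)
  with c count have "core B k' y \<le> ereal (\<rho> + c)" by (intro core_le) auto
  also have "\<dots> \<le> ereal (t + c + e)"
    using \<open>\<rho> < t + e\<close> by simp
  finally show "core B k' y \<le> ereal (t + c) + ereal e"
    by (simp only: plus_ereal.simps)
qed

lemma core_le_dist:
  assumes "finite A" "core A k x \<le> ereal t"
  shows "core A k y \<le> ereal (t + dist x y)"
proof (rule core_le_transfer[OF assms(2) zero_le_dist])
  fix \<rho> assume "real (card (cball x \<rho> \<inter> A)) \<ge> k"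
  moreover have "cball x \<rho> \<subseteq> cball y (\<rho> + dist x y)"
  proof
    fix z assume "z \<in> cball x \<rho>"
    with dist_triangle[of z y x] show "z \<in> cball y (\<rho> + dist x y)"
      by (simp add: dist_commute)
  qed
  then have "card (cball x \<rho> \<inter> A) \<le> card (cball y (\<rho> + dist x y) \<inter> A)"
    using assms(1) by (intro card_mono) auto
  ultimately show "real (card (cball y (\<rho> + dist x y) \<inter> A)) \<ge> k" by linarith
qed

lemma core_le_thicken:
  assumes "finite B" "core A k x \<le> ereal t" "\<delta> \<ge> 0"
    and thick: "\<And>\<rho>. real (card (cball x \<rho> \<inter> A))
                    \<le> real (card (thicken (cball x \<rho>) \<delta> \<inter> B)) + \<delta>"
  shows "core B (k - \<delta>) x \<le> ereal (t + \<delta>)"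
proof (rule core_le_transfer[OF assms(2,3)])
  fix \<rho> assume "real (card (cball x \<rho> \<inter> A)) \<ge> k"
  moreover have "card (thicken (cball x \<rho>) \<delta> \<inter> B) \<le> card (cball x (\<rho> + \<delta>) \<inter> B)"
    using assms(1) thicken_cball_subset by (intro card_mono) auto
  ultimately show "real (card (cball x (\<rho> + \<delta>) \<inter> B)) \<ge> k - \<delta>"
    using thick[of \<rho>] by linarith
qed

lemma core_le_imp_near_point:
  assumes fA: "finite A" and k: "k > 0" and core: "core A k x \<le> ereal t"
  obtains a where "a \<in> A" "dist x a \<le> t"
proof -
  have near: "\<exists>a\<in>A. dist x a \<le> t + e" if "e > 0" for e
  proof -
    from that core have "core A k x < ereal (t + e)" by (simp add: le_less_trans)
    then obtain \<rho> where "\<rho> < t + e" "real (card (cball x \<rho> \<inter> A)) \<ge> k"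
      by (rule core_lessE)
    with k have "cball x \<rho> \<inter> A \<noteq> {}" by auto
    with \<open>\<rho> < t + e\<close> show ?thesis by force
  qed
  then have ne: "A \<noteq> {}"
    by (meson zero_less_one empty_iff)
  have "Min ((dist x) ` A) \<le> t + e" if "e > 0" for e
    using near[OF that] fA by (meson Min_le finite_imageI image_eqI order_trans)
  then have "Min ((dist x) ` A) \<le> t"
    by (rule field_le_epsilon)
  moreover have "Min ((dist x) ` A) \<in> (dist x) ` A"
    using fA ne by (intro Min_in) auto
  ultimately show ?thesis using that by force
qed

lemma Vor_covers:
  assumes "finite B" "B \<noteq> {}"
  obtains b where "b \<in> B" "x \<in> Vor B b"
proof -
  obtain b where "b \<in> B" "\<forall>b'\<in>B. dist b x \<le> dist b' x"
    using arg_min_if_finite[OF assms, of "\<lambda>b. dist b x"] by (metis not_less)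
  then show ?thesis using that unfolding Vor_def by blast
qed

lemma DCr_subset_DCr_of_thicken_count:
  fixes A B :: "'a::euclidean_space set"
  assumes fB: "finite B" and \<beta>: "\<beta> > 0" and \<delta>: "\<delta> \<ge> 0" "k > \<delta>"
    and thick: "\<And>S. closed S \<Longrightarrow> real (card (S \<inter> A)) \<le> real (card (thicken S \<delta> \<inter> B)) + \<delta>"
  shows "DCr \<beta> r k A \<subseteq> DCr \<beta> (max 1 (2 * \<beta>) * ((1 + 1 / \<beta>) * r + \<delta>)) (k - \<delta>) B"
proof
  fix x assume "x \<in> DCr \<beta> r k A"
  then obtain a where "a \<in> A" and core_a: "ereal \<beta> * core A k a \<le> ereal r"
    and dist_ax: "dist a x \<le> r"
    unfolding DCr_def Bset_def Lambda_def by auto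
  define R where "R = (1 + 1 / \<beta>) * r + \<delta>"
  have "r \<ge> 0"
    using dist_ax zero_le_dist[of a x] by linarith
  have R: "R = r / \<beta> + \<delta> + r" "R \<ge> 0"
    using \<beta> \<delta> \<open>r \<ge> 0\<close> by (auto simp: R_def field_simps)
  have "core A k a \<le> ereal (r / \<beta>)"
    using ereal_le_divide_pos[of "ereal \<beta>" "core A k a" "ereal r"] \<beta> core_a by simp
  then have coreB_a: "core B (k - \<delta>) a \<le> ereal (r / \<beta> + \<delta>)"
    using fB \<delta>(1) thick by (intro core_le_thicken) auto
  then obtain q where "q \<in> B" and dist_aq: "dist a q \<le> r / \<beta> + \<delta>"
    using core_le_imp_near_point[OF fB _ coreB_a] \<delta>(2) by auto
  then obtain b where "b \<in> B" and "x \<in> Vor B b"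
    using Vor_covers[OF fB] by blast
  then have "dist b x \<le> dist q x"
    using \<open>q \<in> B\<close> unfolding Vor_def by auto
  also have "\<dots> \<le> dist a q + dist a x"
    by (rule dist_triangle3)
  finally have dist_bx: "dist b x \<le> R"
    using dist_aq dist_ax R(1) by linarith
  have "core B (k - \<delta>) b \<le> ereal (r / \<beta> + \<delta> + dist a b)"
    using fB coreB_a by (rule core_le_dist)
  also have "\<dots> \<le> ereal (2 * R)"
    using dist_triangle2[of a b x] dist_ax dist_bx R(1) by simp
  finally have "ereal \<beta> * core B (k - \<delta>) b \<le> ereal \<beta> * ereal (2 * R)"
    using \<beta> by (intro ereal_mult_left_mono) auto
  also have "\<dots> = ereal (2 * \<beta> * R)"
    by simp
  also have "\<dots> \<le> ereal (max 1 (2 * \<beta>) * R)"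
    using R(2) by (simp add: mult_right_mono)
  finally have "ereal \<beta> * core B (k - \<delta>) b \<le> ereal (max 1 (2 * \<beta>) * R)" .
  moreover have "dist b x \<le> max 1 (2 * \<beta>) * R"
    using dist_bx R(2) mult_right_mono[of 1 "max 1 (2 * \<beta>)" R] by linarith
  ultimately have "x \<in> Bset \<beta> (max 1 (2 * \<beta>) * R) (k - \<delta>) B b"
    unfolding Bset_def Lambda_def by (simp add: dist_commute)
  with \<open>b \<in> B\<close> \<open>x \<in> Vor B b\<close>
  show "x \<in> DCr \<beta> (max 1 (2 * \<beta>) * ((1 + 1 / \<beta>) * r + \<delta>)) (k - \<delta>) B"
    unfolding DCr_def R_def by (intro UN_I[of b] IntI)
qed

theorem mainTheorem8:
  fixes A B :: "'a::euclidean_space set" and \<beta> \<delta> r k :: real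
  assumes "finite A" "finite B" "\<beta> > 0" "\<delta> > prohorov A B"
    and "r > 0" "k > \<delta>"
  shows "DCr \<beta> r k A \<subseteq> DCr \<beta> (max 1 (2 * \<beta>) * ((1 + 1 / \<beta>) * r + \<delta>)) (k - \<delta>) B
       \<and> DCr \<beta> r k B \<subseteq> DCr \<beta> (max 1 (2 * \<beta>) * ((1 + 1 / \<beta>) * r + \<delta>)) (k - \<delta>) A"
proof
  have "\<delta> \<ge> 0"
    by (rule prohorov_lessD(1)[OF assms(1,2,4) closed_empty])
  with assms show "DCr \<beta> r k A \<subseteq> DCr \<beta> (max 1 (2 * \<beta>) * ((1 + 1 / \<beta>) * r + \<delta>)) (k - \<delta>) B"
    by (intro DCr_subset_DCr_of_thicken_count prohorov_lessD(2)[OF assms(1,2,4)])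
  from \<open>\<delta> \<ge> 0\<close> assms show "DCr \<beta> r k B \<subseteq> DCr \<beta> (max 1 (2 * \<beta>) * ((1 + 1 / \<beta>) * r + \<delta>)) (k - \<delta>) A"
    by (intro DCr_subset_DCr_of_thicken_count prohorov_lessD(3)[OF assms(1,2,4)])
qed

end
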